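(* Let $k\geq 1$ be a fixed integer. Then almost surely $$\kappa_3\!\left(G\!\left(n,\tfrac{1}{2}\cdot\frac{\log n+(k+1)\log\log n-\log\log\log n}{n}\right)\right)\leq k-1.$$
   Context: $\log$ is the natural logarithm; $G(n,p)$ is the binomial random graph on $n$ vertices, $n\to\infty$, and "almost surely" means with probability tending to $1$. For $S\subseteq V(G)$, trees $T_1,\dots,T_k$ are internally disjoint trees connecting $S$ if $S\subseteq V(T_i)$, $E(T_i)\cap E(T_j)=\emptyset$ and $V(T_i)\cap V(T_j)=S$ for $i\neq j$; $\kappa(S)$ is the maximum number of such trees and $\kappa_3(G)=\min\{\kappa(S):|S|=3\}$, with $\kappa_3(G)=0$ if $G$ is disconnected. *)

theory Defs
  imports Complex_Main
begin

(* Graphs on vertex set {0..<n}; a graph is given by its edge set, edges are 2-element sets. *)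

definition all_edges :: "nat \<Rightarrow> nat set set" where
  "all_edges n = {e. \<exists>u v. u < n \<and> v < n \<and> u \<noteq> v \<and> e = {u, v}}"

definition gnp_prob :: "nat \<Rightarrow> real \<Rightarrow> (nat set set \<Rightarrow> bool) \<Rightarrow> real" where
  "gnp_prob n p P =
     (\<Sum>E\<in>Pow (all_edges n).
        if P E then p ^ card E * (1 - p) ^ (card (all_edges n) - card E) else 0)"

definition adj :: "'a set set \<Rightarrow> 'a \<Rightarrow> 'a \<Rightarrow> bool" where
  "adj E u v \<longleftrightarrow> u \<noteq> v \<and> {u, v} \<in> E"

definition connected_graph :: "'a set \<Rightarrow> 'a set set \<Rightarrow> bool" where
  "connected_graph V E \<longleftrightarrow> (\<forall>u\<in>V. \<forall>v\<in>V. (adj E)\<^sup>*\<^sup>* u v)"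

definition has_cycle :: "'a set set \<Rightarrow> bool" where
  "has_cycle E \<longleftrightarrow> (\<exists>xs. length xs \<ge> 3 \<and> distinct xs \<and>
      (\<forall>i < length xs. {xs ! i, xs ! ((i + 1) mod length xs)} \<in> E))"

definition is_subtree :: "nat set set \<Rightarrow> nat set \<Rightarrow> nat set set \<Rightarrow> bool" where
  "is_subtree E VT ET \<longleftrightarrow> finite VT \<and> VT \<noteq> {} \<and> ET \<subseteq> E \<and>
     (\<forall>e\<in>ET. e \<subseteq> VT) \<and> connected_graph VT ET \<and> \<not> has_cycle ET"

definition int_disjoint_trees :: "nat set set \<Rightarrow> nat set \<Rightarrow> nat \<Rightarrow> (nat \<Rightarrow> nat set \<times> nat set set) \<Rightarrow> bool" where
  "int_disjoint_trees E S k T \<longleftrightarrow>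
     (\<forall>i<k. is_subtree E (fst (T i)) (snd (T i)) \<and> S \<subseteq> fst (T i)) \<and>
     (\<forall>i<k. \<forall>j<k. i \<noteq> j \<longrightarrow> snd (T i) \<inter> snd (T j) = {} \<and> fst (T i) \<inter> fst (T j) = S)"

definition kappa :: "nat set set \<Rightarrow> nat set \<Rightarrow> nat" where
  "kappa E S = Max {k. \<exists>T. int_disjoint_trees E S k T}"

definition kappa3 :: "nat \<Rightarrow> nat set set \<Rightarrow> nat" where
  "kappa3 n E = (if connected_graph {0..<n} E
                 then Min {kappa E S | S. S \<subseteq> {0..<n} \<and> card S = 3} else 0)"

end

theory Submission
  imports Defs "HOL-Real_Asymp.Real_Asymp"
begin

text \<open>For this edge probability the expected number of isolated vertices,
  \<open>n (1 - p)\<^sup>n\<^sup>-\<^sup>1 \<approx> n e\<^sup>-\<^sup>n\<^sup>p \<approx> \<surd>(n log log n / (log n)\<^sup>k\<^sup>+\<^sup>1)\<close>,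
  tends to infinity, while distinct vertices are isolated almost independently
  (they share a single potential edge). By the second moment method the graph almost surely has
  an isolated vertex; it is then disconnected, so \<open>\<kappa>\<^sub>3 = 0 \<le> k - 1\<close>.\<close>

definition bernoulli_weight :: "'a set \<Rightarrow> real \<Rightarrow> 'a set \<Rightarrow> real" where
  "bernoulli_weight A p E = p ^ card E * (1 - p) ^ (card A - card E)"

lemma bernoulli_weight_nonneg: "0 \<le> p \<Longrightarrow> p \<le> 1 \<Longrightarrow> 0 \<le> bernoulli_weight A p E"
  unfolding bernoulli_weight_def by simp

lemma sum_bernoulli_weight_avoiding:
  assumes fin: "finite A" and BA: "B \<subseteq> A"
  shows "(\<Sum>E\<in>Pow A. if E \<inter> B = {} then bernoulli_weight A p E else 0) = (1 - p) ^ card B"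
proof -
  have finB: "finite B" using fin BA finite_subset by blast
  have "(\<Sum>E\<in>Pow A. if E \<inter> B = {} then bernoulli_weight A p E else 0)
      = (\<Sum>E\<in>{E\<in>Pow A. E \<inter> B = {}}. bernoulli_weight A p E)"
    by (rule sum.inter_filter[symmetric]) (simp add: fin)
  also have "{E\<in>Pow A. E \<inter> B = {}} = Pow (A - B)" by auto
  also have "(\<Sum>E\<in>Pow (A - B). bernoulli_weight A p E)
      = (\<Sum>E\<in>Pow (A - B). (\<Prod>e\<in>E. p) * (\<Prod>e\<in>(A - B) - E. 1 - p)) * (1 - p) ^ card B"
    unfolding sum_distrib_right
  proof (rule sum.cong)
    fix E assume E: "E \<in> Pow (A - B)"
    have finE: "finite E" using E fin finite_subset by auto
    have "card A = card (A - B) + card B"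
      using card_Diff_subset[OF finB BA] card_mono[OF fin BA] by simp
    moreover have "card ((A - B) - E) = card (A - B) - card E"
      using E finE by (simp add: card_Diff_subset)
    moreover have "card E \<le> card (A - B)" using E fin by (simp add: card_mono)
    ultimately have "card A - card E = card ((A - B) - E) + card B" by simp
    then show "bernoulli_weight A p E = (\<Prod>e\<in>E. p) * (\<Prod>e\<in>(A - B) - E. 1 - p) * (1 - p) ^ card B"
      unfolding bernoulli_weight_def by (simp add: power_add)
  qed simp
  also have "(\<Sum>E\<in>Pow (A - B). (\<Prod>e\<in>E. p) * (\<Prod>e\<in>(A - B) - E. 1 - p)) = (\<Prod>e\<in>A - B. p + (1 - p))"
    by (rule prod_add[symmetric]) (use fin in simp)
  finally show ?thesis by simp
qed

lemma sum_bernoulli_weight: "finite A \<Longrightarrow> (\<Sum>E\<in>Pow A. bernoulli_weight A p E) = 1"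
  using sum_bernoulli_weight_avoiding[of A "{}" p] by simp

lemma second_moment_method:
  fixes w X :: "'a \<Rightarrow> real"
  assumes w_nonneg: "\<And>x. x \<in> S \<Longrightarrow> 0 \<le> w x" and w_sum: "(\<Sum>x\<in>S. w x) = 1"
  defines "m \<equiv> (\<Sum>x\<in>S. w x * X x)"
  shows "(\<Sum>x\<in>S. if X x = 0 then w x else 0) * m\<^sup>2 \<le> (\<Sum>x\<in>S. w x * (X x)\<^sup>2) - m\<^sup>2"
proof -
  have "(\<Sum>x\<in>S. if X x = 0 then w x else 0) * m\<^sup>2 = (\<Sum>x\<in>S. (if X x = 0 then w x else 0) * m\<^sup>2)"
    by (simp add: sum_distrib_right)
  also have "\<dots> \<le> (\<Sum>x\<in>S. w x * (X x - m)\<^sup>2)"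
    by (rule sum_mono) (use w_nonneg in auto)
  also have "\<dots> = (\<Sum>x\<in>S. w x * (X x)\<^sup>2) - 2 * m * (\<Sum>x\<in>S. w x * X x) + m\<^sup>2 * (\<Sum>x\<in>S. w x)"
    by (simp add: power2_diff algebra_simps sum.distrib sum_subtractf sum_distrib_left sum_distrib_right)
  also have "\<dots> = (\<Sum>x\<in>S. w x * (X x)\<^sup>2) - m\<^sup>2"
    unfolding w_sum m_def[symmetric] by (simp add: power2_eq_square)
  finally show ?thesis .
qed

lemma gnp_prob_eq_sum: "gnp_prob n p P = (\<Sum>E\<in>Pow (all_edges n). if P E then bernoulli_weight (all_edges n) p E else 0)"
  unfolding gnp_prob_def bernoulli_weight_def ..

lemma finite_all_edges: "finite (all_edges n)"
proof (rule finite_subset)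
  show "all_edges n \<subseteq> Pow {0..<n}" unfolding all_edges_def by auto
qed simp

lemma gnp_prob_nonneg: "0 \<le> p \<Longrightarrow> p \<le> 1 \<Longrightarrow> 0 \<le> gnp_prob n p P"
  unfolding gnp_prob_eq_sum by (rule sum_nonneg) (simp add: bernoulli_weight_nonneg)

lemma gnp_prob_compl: "gnp_prob n p P + gnp_prob n p (\<lambda>E. \<not> P E) = 1"
proof -
  have "gnp_prob n p P + gnp_prob n p (\<lambda>E. \<not> P E) = (\<Sum>E\<in>Pow (all_edges n). bernoulli_weight (all_edges n) p E)"
    unfolding gnp_prob_eq_sum sum.distrib[symmetric] by (rule sum.cong) auto
  then show ?thesis by (simp add: sum_bernoulli_weight finite_all_edges)
qed

lemma gnp_prob_le_1: "0 \<le> p \<Longrightarrow> p \<le> 1 \<Longrightarrow> gnp_prob n p P \<le> 1"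
  using gnp_prob_compl[of n p P] gnp_prob_nonneg[of p n "\<lambda>E. \<not> P E"] by linarith

lemma gnp_prob_mono:
  assumes "0 \<le> p" "p \<le> 1" and "\<And>E. P E \<Longrightarrow> Q E"
  shows "gnp_prob n p P \<le> gnp_prob n p Q"
  unfolding gnp_prob_eq_sum by (rule sum_mono) (use assms bernoulli_weight_nonneg in auto)

definition incident_edges :: "nat \<Rightarrow> nat \<Rightarrow> nat set set" where
  "incident_edges n v = {e\<in>all_edges n. v \<in> e}"

lemma incident_edges_subset: "incident_edges n v \<subseteq> all_edges n"
  unfolding incident_edges_def by auto

lemma card_incident_edges: "v < n \<Longrightarrow> card (incident_edges n v) = n - 1"
proof -
  assume v: "v < n"
  have "incident_edges n v = (\<lambda>u. {u, v}) ` ({0..<n} - {v})"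
    unfolding incident_edges_def all_edges_def using v by auto
  moreover have "inj_on (\<lambda>u. {u, v}) ({0..<n} - {v})"
    by (auto simp: inj_on_def doubleton_eq_iff)
  ultimately show ?thesis using v by (simp add: card_image)
qed

lemma card_incident_edges_Un:
  assumes "u < n" "v < n" "u \<noteq> v"
  shows "2 * n - 3 \<le> card (incident_edges n u \<union> incident_edges n v)"
proof -
  have "incident_edges n u \<inter> incident_edges n v \<subseteq> {{u, v}}"
    unfolding incident_edges_def all_edges_def using assms by auto
  then have "card (incident_edges n u \<inter> incident_edges n v) \<le> 1"
    using card_mono[of "{{u, v}}"] by fastforce
  moreover have "card (incident_edges n u \<union> incident_edges n v) + card (incident_edges n u \<inter> incident_edges n v)
      = card (incident_edges n u) + card (incident_edges n v)"
    using card_Un_Int finite_subset[OF incident_edges_subset finite_all_edges] by metis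
  ultimately show ?thesis using card_incident_edges assms by simp
qed

definition isolated_count :: "nat \<Rightarrow> nat set set \<Rightarrow> real" where
  "isolated_count n E = (\<Sum>v<n. if E \<inter> incident_edges n v = {} then 1 else 0)"

lemma isolated_count_eq_0_iff:
  assumes "E \<subseteq> all_edges n"
  shows "isolated_count n E = 0 \<longleftrightarrow> (\<forall>v<n. \<exists>e\<in>E. v \<in> e)"
proof -
  have "isolated_count n E = 0 \<longleftrightarrow> (\<forall>v<n. E \<inter> incident_edges n v \<noteq> {})"
    unfolding isolated_count_def by (subst sum_nonneg_eq_0_iff) auto
  also have "\<dots> \<longleftrightarrow> (\<forall>v<n. \<exists>e\<in>E. v \<in> e)"
    using assms unfolding incident_edges_def by auto
  finally show ?thesis .
qed

lemma isolated_count_mean: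
  "(\<Sum>E\<in>Pow (all_edges n). bernoulli_weight (all_edges n) p E * isolated_count n E)
     = n * (1 - p) ^ (n - 1)"
proof -
  let ?w = "bernoulli_weight (all_edges n) p"
  have "(\<Sum>E\<in>Pow (all_edges n). ?w E * isolated_count n E)
      = (\<Sum>v<n. \<Sum>E\<in>Pow (all_edges n). if E \<inter> incident_edges n v = {} then ?w E else 0)"
    unfolding isolated_count_def sum_distrib_left
    by (subst sum.swap) (simp add: if_distrib cong: if_cong)
  also have "\<dots> = (\<Sum>v<n. (1 - p) ^ (n - 1))"
    by (intro sum.cong refl)
      (simp add: sum_bernoulli_weight_avoiding finite_all_edges incident_edges_subset card_incident_edges)
  finally show ?thesis by simp
qed

lemma isolated_count_second_moment_le:
  assumes "0 \<le> p" "p \<le> 1"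
  shows "(\<Sum>E\<in>Pow (all_edges n). bernoulli_weight (all_edges n) p E * (isolated_count n E)\<^sup>2)
     \<le> n * (1 - p) ^ (n - 1) + real (n * (n - 1)) * (1 - p) ^ (2 * n - 3)"
proof -
  let ?w = "bernoulli_weight (all_edges n) p"
  let ?I = "\<lambda>u v. incident_edges n u \<union> incident_edges n v"
  have square: "(isolated_count n E)\<^sup>2 = (\<Sum>u<n. \<Sum>v<n. if E \<inter> ?I u v = {} then 1 else 0)" for E
    unfolding isolated_count_def power2_eq_square sum_product
    by (intro sum.cong refl) auto
  have "(\<Sum>E\<in>Pow (all_edges n). ?w E * (isolated_count n E)\<^sup>2)
      = (\<Sum>u<n. \<Sum>v<n. \<Sum>E\<in>Pow (all_edges n). if E \<inter> ?I u v = {} then ?w E else 0)"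
    unfolding square sum_distrib_left
    by (subst sum.swap, subst (2) sum.swap) (simp add: if_distrib cong: if_cong)
  also have "\<dots> = (\<Sum>u<n. \<Sum>v<n. (1 - p) ^ card (?I u v))"
    by (intro sum.cong refl sum_bernoulli_weight_avoiding finite_all_edges)
      (use incident_edges_subset in blast)
  also have "\<dots> \<le> (\<Sum>u<n. (1 - p) ^ (n - 1) + real (n - 1) * (1 - p) ^ (2 * n - 3))"
  proof (rule sum_mono)
    fix u assume u: "u \<in> {..<n}"
    have "(\<Sum>v\<in>{..<n} - {u}. (1 - p) ^ card (?I u v)) \<le> (\<Sum>v\<in>{..<n} - {u}. (1 - p) ^ (2 * n - 3))"
      by (intro sum_mono power_decreasing) (use card_incident_edges_Un u assms in auto)
    then show "(\<Sum>v<n. (1 - p) ^ card (?I u v)) \<le> (1 - p) ^ (n - 1) + real (n - 1) * (1 - p) ^ (2 * n - 3)"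
      using u card_incident_edges[of u n] by (simp add: sum.remove)
  qed
  finally show ?thesis by (simp add: algebra_simps)
qed

lemma gnp_prob_no_isolated_vertex_le:
  assumes n: "2 \<le> n" and p: "0 \<le> p" "p < 1"
  shows "gnp_prob n p (\<lambda>E. \<forall>v<n. \<exists>e\<in>E. v \<in> e) \<le> 1 / (n * (1 - p) ^ (n - 1)) + p / (1 - p)"
proof -
  define q where "q = 1 - p"
  define m where "m = n * q ^ (n - 1)"
  have q: "0 < q" "q \<le> 1" using p unfolding q_def by auto
  have m: "0 < m" using n q unfolding m_def by simp
  have "2 * n - 3 + 1 = (n - 1) + (n - 1)" using n by simp
  then have q_power: "q ^ (2 * n - 3) * q = q ^ (n - 1) * q ^ (n - 1)"
    by (metis power_add power_Suc2 Suc_eq_plus1)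
  have "gnp_prob n p (\<lambda>E. \<forall>v<n. \<exists>e\<in>E. v \<in> e)
      = (\<Sum>E\<in>Pow (all_edges n). if isolated_count n E = 0 then bernoulli_weight (all_edges n) p E else 0)"
    unfolding gnp_prob_eq_sum by (intro sum.cong refl) (simp add: isolated_count_eq_0_iff)
  also have "\<dots> * m\<^sup>2 \<le> m + real (n * (n - 1)) * q ^ (2 * n - 3) - m\<^sup>2"
    using second_moment_method[of "Pow (all_edges n)" "bernoulli_weight (all_edges n) p" "isolated_count n"]
      isolated_count_second_moment_le[of p n] p
    by (simp add: bernoulli_weight_nonneg sum_bernoulli_weight finite_all_edges isolated_count_mean
        m_def q_def)
  also have "\<dots> \<le> m + n * n * q ^ (2 * n - 3) * p"
  proof -
    have "m\<^sup>2 = n * n * (q ^ (n - 1) * q ^ (n - 1))"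
      unfolding m_def power2_eq_square by (simp add: algebra_simps)
    also have "\<dots> = n * n * q ^ (2 * n - 3) * q"
      by (simp add: q_power)
    moreover have "real (n * (n - 1)) * q ^ (2 * n - 3) \<le> n * n * q ^ (2 * n - 3)"
      using q by (intro mult_right_mono) (auto simp flip: of_nat_mult)
    ultimately show ?thesis by (simp add: q_def algebra_simps)
  qed
  finally have "gnp_prob n p (\<lambda>E. \<forall>v<n. \<exists>e\<in>E. v \<in> e) \<le> (m + n * n * q ^ (2 * n - 3) * p) / m\<^sup>2"
    using m by (simp add: pos_le_divide_eq)
  also have "\<dots> = 1 / m + p / q"
    using q_power q m n by (simp add: m_def field_simps power2_eq_square)
  finally show ?thesis unfolding m_def q_def .
qed

lemma gnp_prob_isolated_vertex_tendsto_1: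
  fixes p :: "nat \<Rightarrow> real"
  assumes p_nonneg: "eventually (\<lambda>n. 0 \<le> p n) sequentially" and p_0: "p \<longlonglongrightarrow> 0"
    and mean: "filterlim (\<lambda>n. n * (1 - p n) ^ (n - 1)) at_top sequentially"
  shows "(\<lambda>n. gnp_prob n (p n) (\<lambda>E. \<exists>v<n. \<forall>e\<in>E. v \<notin> e)) \<longlonglongrightarrow> 1"
proof (rule tendsto_sandwich)
  have "eventually (\<lambda>n. p n < 1) sequentially" using p_0 by (rule order_tendstoD) simp
  with p_nonneg show "eventually (\<lambda>n. 1 - (1 / (n * (1 - p n) ^ (n - 1)) + p n / (1 - p n))
      \<le> gnp_prob n (p n) (\<lambda>E. \<exists>v<n. \<forall>e\<in>E. v \<notin> e)) sequentially"
    using eventually_ge_at_top[of 2]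
  proof eventually_elim
    case (elim n)
    then show ?case
      using gnp_prob_compl[of n "p n" "\<lambda>E. \<exists>v<n. \<forall>e\<in>E. v \<notin> e"] gnp_prob_no_isolated_vertex_le[of n "p n"]
      by auto
  qed
  show "eventually (\<lambda>n. gnp_prob n (p n) (\<lambda>E. \<exists>v<n. \<forall>e\<in>E. v \<notin> e) \<le> 1) sequentially"
    using p_nonneg order_tendstoD(2)[OF p_0 zero_less_one]
  proof eventually_elim
    case (elim n)
    then show ?case by (simp add: gnp_prob_le_1)
  qed
  have "(\<lambda>n. 1 / (n * (1 - p n) ^ (n - 1))) \<longlonglongrightarrow> 0"
    using tendsto_inverse_0_at_top[OF mean] by (simp add: divide_inverse)
  then show "(\<lambda>n. 1 - (1 / (n * (1 - p n) ^ (n - 1)) + p n / (1 - p n))) \<longlonglongrightarrow> 1"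
    using tendsto_diff[OF tendsto_const tendsto_add[OF _ tendsto_divide[OF p_0 tendsto_diff[OF tendsto_const p_0]]]]
    by force
qed (rule tendsto_const)

lemma not_connected_graph_if_isolated:
  fixes n :: nat
  assumes "2 \<le> n" "v < n" "\<forall>e\<in>E. v \<notin> e"
  shows "\<not> connected_graph {0..<n} E"
proof
  define u where "u = (if v = 0 then 1 else 0 :: nat)"
  have u: "u < n" "u \<noteq> v" using assms unfolding u_def by auto
  assume "connected_graph {0..<n} E"
  then have "(adj E)\<^sup>*\<^sup>* u v" using u assms unfolding connected_graph_def by auto
  then show False
  proof (cases rule: rtranclp.cases)
    case (rtrancl_into_rtrancl w)
    then show False using assms unfolding adj_def by auto
  qed (use u in simp)
qed

lemma exp_le_one_minus_power:
  assumes "0 \<le> p" "p \<le> 1/2"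
  shows "exp (- real n * (p + 2 * p\<^sup>2)) \<le> (1 - p) ^ (n - 1)"
proof -
  have "real (n - 1) * (p + 2 * p\<^sup>2) \<le> real n * (p + 2 * p\<^sup>2)"
    by (intro mult_right_mono) (use assms in auto)
  then have "- real n * (p + 2 * p\<^sup>2) \<le> real (n - 1) * (- p - 2 * p\<^sup>2)"
    by (simp add: algebra_simps)
  also have "\<dots> \<le> real (n - 1) * ln (1 - p)"
    by (intro mult_left_mono ln_one_minus_pos_lower_bound) (use assms in auto)
  finally have "exp (- real n * (p + 2 * p\<^sup>2)) \<le> exp (real (n - 1) * ln (1 - p))" by simp
  also have "\<dots> = (1 - p) ^ (n - 1)" using assms by (simp add: exp_of_nat_mult)
  finally show ?thesis .
qed

theorem theorem4:
  fixes k :: nat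
  assumes "k \<ge> 1"
  defines "p \<equiv> (\<lambda>n::nat. 1/2 * (ln (real n) + (real k + 1) * ln (ln (real n))
                                    - ln (ln (ln (real n)))) / real n)"
  shows "(\<lambda>n. gnp_prob n (p n) (\<lambda>E. kappa3 n E \<le> k - 1)) \<longlonglongrightarrow> 1"
proof -
  have p_pos: "eventually (\<lambda>n. 0 < p n) sequentially" unfolding p_def by real_asymp
  have p_0: "p \<longlonglongrightarrow> 0" unfolding p_def by real_asymp
  have p_small: "eventually (\<lambda>n. p n < 1/2) sequentially" using p_0 by (rule order_tendstoD) simp
  have "filterlim (\<lambda>n. n * exp (- real n * (p n + 2 * (p n)\<^sup>2))) at_top sequentially"
    unfolding p_def by real_asymp
  moreover have "eventually (\<lambda>n. n * exp (- real n * (p n + 2 * (p n)\<^sup>2)) \<le> n * (1 - p n) ^ (n - 1)) sequentially"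
    using p_pos p_small
    by eventually_elim (intro mult_left_mono exp_le_one_minus_power, auto)
  ultimately have "filterlim (\<lambda>n. n * (1 - p n) ^ (n - 1)) at_top sequentially"
    by (rule filterlim_at_top_mono)
  then have isolated: "(\<lambda>n. gnp_prob n (p n) (\<lambda>E. \<exists>v<n. \<forall>e\<in>E. v \<notin> e)) \<longlonglongrightarrow> 1"
    using p_pos p_0 by (intro gnp_prob_isolated_vertex_tendsto_1) (auto elim: eventually_mono)
  show ?thesis
  proof (rule tendsto_sandwich[OF _ _ isolated tendsto_const])
    show "eventually (\<lambda>n. gnp_prob n (p n) (\<lambda>E. \<exists>v<n. \<forall>e\<in>E. v \<notin> e) \<le> gnp_prob n (p n) (\<lambda>E. kappa3 n E \<le> k - 1)) sequentially"
      using p_pos p_small eventually_ge_at_top[of 2]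
      by eventually_elim (intro gnp_prob_mono, auto simp: kappa3_def dest: not_connected_graph_if_isolated)
    show "eventually (\<lambda>n. gnp_prob n (p n) (\<lambda>E. kappa3 n E \<le> k - 1) \<le> 1) sequentially"
      using p_pos p_small
      by eventually_elim (simp add: gnp_prob_le_1)
  qed
qed

end
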